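(* Let $G$ be the two-player game with $A_i=\{a_{i1},a_{i2}\}$ and $\pi(a_{11},a_{21})=(5,5)$, $\pi(a_{11},a_{22})=(0,0)$, $\pi(a_{12},a_{21})=(0,0)$, $\pi(a_{12},a_{22})=(5,10)$. Then for every $p\in(0,1)$, the pure profile $(a_{11},a_{21})$ is stable for the degree of observability $p$ (although it is Pareto dominated by $(a_{12},a_{22})$).
   Context: Preference types: $\Theta=\mathbb{R}^A$, $A=A_1\times A_2$ (extended bilinearly; $\pi_i$ likewise). $\mathcal{M}(\Theta^2)$: product distributions $\mu=\mu_1\times\mu_2$ with finitely supported marginals; $\mu(\theta)=\mu_1(\theta_1)\mu_2(\theta_2)$, $\mu_{-i}=\mu_j$ ($j\ne i$). Mutants: for nonempty $J\subseteq N=\{1,2\}$, $\tilde\theta_J\in\prod_{j\in J}(\Theta\setminus\operatorname{supp}\mu_j)$ with shares $\varepsilon\in(0,1)^{|J|}$, $\|\varepsilon\|=\max_j\varepsilon_j$; post-entry $\tilde\mu^\varepsilon_i=(1-\varepsilon_i)\mu_i+\varepsilon_i\delta_{\tilde\theta_i}$ for $i\in J$, $\mu_i$ otherwise. Partial observability with degree $p\in(0,1)$: each player independently observes opponents' types with probability $p$ and otherwise knows only $\mu_{-i}$. Strategies: $b:\operatorname{supp}\mu\to\prod_i\Delta(A_i)$ (play when observing) and $s_i:\operatorname{supp}\mu_i\to\Delta(A_i)$ (play when not observing), $s(\theta)=(s_i(\theta_i))_i$. For a matched profile $\theta$ and the set $T\subseteq N$ of non-observing players, the profile played is $(s(\theta)_T,b(\theta)_{-T})$.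 $(b,s)$ is an equilibrium if for all $\theta\in\operatorname{supp}\mu$ and $i$: $b_i(\theta)\in\arg\max_{\sigma_i}\sum_{T\subseteq N\setminus\{i\}}p^{n-1-|T|}(1-p)^{|T|}\theta_i(\sigma_i,(s_{-i}(\theta_{-i})_T,b_{-i}(\theta)_{-T}))$ and $s_i(\theta_i)\in\arg\max_{\sigma_i}\sum_{\theta'_{-i}}\mu_{-i}(\theta'_{-i})\sum_{T\subseteq N\setminus\{i\}}p^{n-1-|T|}(1-p)^{|T|}\theta_i(\sigma_i,(s_{-i}(\theta'_{-i})_T,b_{-i}(\theta_i,\theta'_{-i})_{-T}))$ (here $n=2$); $B_p(\mu)$ is the set of these; $(\mu,b,s)$ is a configuration. Aggregate outcome: $\varphi_{\mu,b,s}(a)=\sum_{\theta}\mu(\theta)\sum_{T\subseteq N}p^{n-|T|}(1-p)^{|T|}\prod_i(s(\theta)_T,b(\theta)_{-T})_i(a_i)$. Average fitness: $\Pi_{\theta_i}(\mu;b,s)=\sum_{\theta'_{-i}}\mu_{-i}(\theta'_{-i})\sum_{T\subseteq N}p^{n-|T|}(1-p)^{|T|}\pi_i(s(\theta_i,\theta'_{-i})_T,b(\theta_i,\theta'_{-i})_{-T})$. Balanced: equal average fitness of all types within each population. Nearby set: $B_p^\eta(\tilde\mu^\varepsilon;b,s)=\{(\tilde b,\tilde s)\in B_p(\tilde\mu^\varepsilon):\max_i\|\tilde b_i(\theta)-b_i(\theta)\|\le\eta,\ \max_i\|\tilde s_i(\theta_i)-s_i(\theta_i)\|\le\eta\ \forall\theta\in\operatorname{supp}\mu\}$.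 $(\mu,b,s)$ is stable (for degree $p$) if balanced and for every nonempty $J$, every $\tilde\theta_J$, every $\eta>0$, there are $\bar\eta\in[0,\eta)$, $\bar\epsilon\in(0,1)$ such that for all $\varepsilon$ with $\|\varepsilon\|\in(0,\bar\epsilon)$, $B_p^{\bar\eta}(\tilde\mu^\varepsilon;b,s)\ne\emptyset$ and each of its elements satisfies (i) some $j\in J$ has $\Pi_{\theta_j}>\Pi_{\tilde\theta_j}$ (post-entry) for all $\theta_j\in\operatorname{supp}\mu_j$, or (ii) for every $i$ all types in $\operatorname{supp}\tilde\mu^\varepsilon_i$ have equal post-entry average fitness. A pure profile $a^*$ is stable for degree $p$ if the point mass at $a^*$ is the aggregate outcome of a stable configuration for $p$. *)

theory Defs
  imports Complex_Main
begin

datatype act = act1 | act2   (* a_{i1} = act1, a_{i2} = act2 for player i *)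

lemma UNIV_act: "(UNIV :: act set) = {act1, act2}"
  using act.exhaust by auto

instance act :: finite
  by standard (simp add: UNIV_act)

datatype pl = P1 | P2

fun other :: "pl \<Rightarrow> pl" where
  "other P1 = P2" | "other P2 = P1"

type_synonym prof = "act \<times> act"          (* pure profile (action of player 1, action of player 2) *)
type_synonym ty = "prof \<Rightarrow> real"         (* preference types Theta = R^A *)
type_synonym mix = "act \<Rightarrow> real"

definition is_mix :: "mix \<Rightarrow> bool" where
  "is_mix x \<longleftrightarrow> (\<forall>a. 0 \<le> x a) \<and> (\<Sum>a\<in>UNIV. x a) = 1"

text \<open>Bilinear extension of a type/payoff to a mixed profile (player 1's strategy first).\<close>
definition evm :: "ty \<Rightarrow> mix \<Rightarrow> mix \<Rightarrow> real" where
  "evm th x y = (\<Sum>a\<in>UNIV. \<Sum>c\<in>UNIV. x a * y c * th (a, c))"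

definition evo :: "pl \<Rightarrow> ty \<Rightarrow> mix \<Rightarrow> mix \<Rightarrow> real" where
  "evo i th x y = (if i = P1 then evm th x y else evm th y x)"

definition mt :: "pl \<Rightarrow> ty \<Rightarrow> ty \<Rightarrow> ty \<times> ty" where
  "mt i t t' = (if i = P1 then (t, t') else (t', t))"

text \<open>A population state is a product distribution; mu i is the finitely supported marginal of population i.\<close>
definition supp :: "(ty \<Rightarrow> real) \<Rightarrow> ty set" where
  "supp d = {t. d t \<noteq> 0}"

definition fin_dist :: "(ty \<Rightarrow> real) \<Rightarrow> bool" where
  "fin_dist d \<longleftrightarrow> finite (supp d) \<and> (\<forall>t. 0 \<le> d t) \<and> (\<Sum>t\<in>supp d. d t) = 1"

definition pop_state :: "(pl \<Rightarrow> ty \<Rightarrow> real) \<Rightarrow> bool" where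
  "pop_state mu \<longleftrightarrow> (\<forall>i. fin_dist (mu i))"

text \<open>b i (t1,t2): play of player i when observing in the match (t1,t2);
  s i t: play of player i of type t when not observing.\<close>
definition is_eq :: "real \<Rightarrow> (pl \<Rightarrow> ty \<Rightarrow> real) \<Rightarrow> (pl \<Rightarrow> ty \<times> ty \<Rightarrow> mix) \<Rightarrow> (pl \<Rightarrow> ty \<Rightarrow> mix) \<Rightarrow> bool" where
  "is_eq p mu b s \<longleftrightarrow>
     (\<forall>i t t'. t \<in> supp (mu i) \<and> t' \<in> supp (mu (other i)) \<longrightarrow>
        is_mix (b i (mt i t t')) \<and>
        (\<forall>\<sigma>. is_mix \<sigma> \<longrightarrow>
           p * evo i t \<sigma> (b (other i) (mt i t t')) + (1 - p) * evo i t \<sigma> (s (other i) t')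
           \<le> p * evo i t (b i (mt i t t')) (b (other i) (mt i t t'))
             + (1 - p) * evo i t (b i (mt i t t')) (s (other i) t'))) \<and>
     (\<forall>i t. t \<in> supp (mu i) \<longrightarrow>
        is_mix (s i t) \<and>
        (\<forall>\<sigma>. is_mix \<sigma> \<longrightarrow>
           (\<Sum>t'\<in>supp (mu (other i)). mu (other i) t' *
              (p * evo i t \<sigma> (b (other i) (mt i t t')) + (1 - p) * evo i t \<sigma> (s (other i) t')))
           \<le> (\<Sum>t'\<in>supp (mu (other i)). mu (other i) t' *
              (p * evo i t (s i t) (b (other i) (mt i t t')) + (1 - p) * evo i t (s i t) (s (other i) t')))))"

text \<open>Expected value of f in a match th, summing over the sets T of non-observing players.\<close>
definition eo :: "real \<Rightarrow> (pl \<Rightarrow> ty \<times> ty \<Rightarrow> mix) \<Rightarrow> (pl \<Rightarrow> ty \<Rightarrow> mix) \<Rightarrow> ty \<times> ty \<Rightarrow> ty \<Rightarrow> real" where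
  "eo p b s th f =
     p ^ 2 * evm f (b P1 th) (b P2 th)
   + p * (1 - p) * evm f (s P1 (fst th)) (b P2 th)
   + p * (1 - p) * evm f (b P1 th) (s P2 (snd th))
   + (1 - p) ^ 2 * evm f (s P1 (fst th)) (s P2 (snd th))"

definition agg :: "real \<Rightarrow> (pl \<Rightarrow> ty \<Rightarrow> real) \<Rightarrow> (pl \<Rightarrow> ty \<times> ty \<Rightarrow> mix) \<Rightarrow> (pl \<Rightarrow> ty \<Rightarrow> mix) \<Rightarrow> prof \<Rightarrow> real" where
  "agg p mu b s a =
     (\<Sum>t1\<in>supp (mu P1). \<Sum>t2\<in>supp (mu P2).
        mu P1 t1 * mu P2 t2 * eo p b s (t1, t2) (\<lambda>c. if c = a then 1 else 0))"

text \<open>Average fitness of type t in population i; pay i is the material payoff of player i.\<close>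
definition fitness :: "(pl \<Rightarrow> ty) \<Rightarrow> real \<Rightarrow> (pl \<Rightarrow> ty \<Rightarrow> real) \<Rightarrow> (pl \<Rightarrow> ty \<times> ty \<Rightarrow> mix) \<Rightarrow> (pl \<Rightarrow> ty \<Rightarrow> mix) \<Rightarrow> pl \<Rightarrow> ty \<Rightarrow> real" where
  "fitness pay p mu b s i t =
     (\<Sum>t'\<in>supp (mu (other i)). mu (other i) t' * eo p b s (mt i t t') (pay i))"

definition balanced :: "(pl \<Rightarrow> ty) \<Rightarrow> real \<Rightarrow> (pl \<Rightarrow> ty \<Rightarrow> real) \<Rightarrow> (pl \<Rightarrow> ty \<times> ty \<Rightarrow> mix) \<Rightarrow> (pl \<Rightarrow> ty \<Rightarrow> mix) \<Rightarrow> bool" where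
  "balanced pay p mu b s \<longleftrightarrow>
     (\<forall>i. \<forall>t\<in>supp (mu i). \<forall>t'\<in>supp (mu i). fitness pay p mu b s i t = fitness pay p mu b s i t')"

definition post :: "(pl \<Rightarrow> ty \<Rightarrow> real) \<Rightarrow> pl set \<Rightarrow> (pl \<Rightarrow> ty) \<Rightarrow> (pl \<Rightarrow> real) \<Rightarrow> pl \<Rightarrow> ty \<Rightarrow> real" where
  "post mu J mut eps i =
     (if i \<in> J then (\<lambda>t. (1 - eps i) * mu i t + eps i * (if t = mut i then 1 else 0)) else mu i)"

text \<open>Distance of mixed strategies (max norm; any norm gives the same notion of stability).\<close>
definition mdist :: "mix \<Rightarrow> mix \<Rightarrow> real" where
  "mdist x y = Max ((\<lambda>a. \<bar>x a - y a\<bar>) ` UNIV)"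

definition nearby :: "real \<Rightarrow> (pl \<Rightarrow> ty \<Rightarrow> real) \<Rightarrow> (pl \<Rightarrow> ty \<Rightarrow> real) \<Rightarrow> (pl \<Rightarrow> ty \<times> ty \<Rightarrow> mix) \<Rightarrow> (pl \<Rightarrow> ty \<Rightarrow> mix) \<Rightarrow> real
     \<Rightarrow> ((pl \<Rightarrow> ty \<times> ty \<Rightarrow> mix) \<times> (pl \<Rightarrow> ty \<Rightarrow> mix)) set" where
  "nearby p mu' mu b s eta =
     {(b', s'). is_eq p mu' b' s' \<and>
        (\<forall>i t1 t2. t1 \<in> supp (mu P1) \<and> t2 \<in> supp (mu P2) \<longrightarrow> mdist (b' i (t1, t2)) (b i (t1, t2)) \<le> eta) \<and>
        (\<forall>i t. t \<in> supp (mu i) \<longrightarrow> mdist (s' i t) (s i t) \<le> eta)}"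

definition stable_config :: "(pl \<Rightarrow> ty) \<Rightarrow> real \<Rightarrow> (pl \<Rightarrow> ty \<Rightarrow> real) \<Rightarrow> (pl \<Rightarrow> ty \<times> ty \<Rightarrow> mix) \<Rightarrow> (pl \<Rightarrow> ty \<Rightarrow> mix) \<Rightarrow> bool" where
  "stable_config pay p mu b s \<longleftrightarrow>
     balanced pay p mu b s \<and>
     (\<forall>J mut eta. J \<noteq> {} \<longrightarrow> (\<forall>j\<in>J. mut j \<notin> supp (mu j)) \<longrightarrow> 0 < eta \<longrightarrow>
        (\<exists>eta' ep. 0 \<le> eta' \<and> eta' < eta \<and> 0 < ep \<and> ep < 1 \<and>
           (\<forall>eps. (\<forall>j\<in>J. 0 < eps j \<and> eps j < ep) \<longrightarrow>
              (let mu' = post mu J mut eps in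
                 nearby p mu' mu b s eta' \<noteq> {} \<and>
                 (\<forall>(b', s')\<in>nearby p mu' mu b s eta'.
                    (\<exists>j\<in>J. \<forall>t\<in>supp (mu j). fitness pay p mu' b' s' j t > fitness pay p mu' b' s' j (mut j))
                    \<or> balanced pay p mu' b' s')))))"

definition stable_profile :: "(pl \<Rightarrow> ty) \<Rightarrow> real \<Rightarrow> prof \<Rightarrow> bool" where
  "stable_profile pay p a \<longleftrightarrow>
     (\<exists>mu b s. pop_state mu \<and> is_eq p mu b s \<and> stable_config pay p mu b s \<and>
        (\<forall>c. agg p mu b s c = (if c = a then 1 else 0)))"

fun piG :: "pl \<Rightarrow> ty" where
  "piG P1 (act1, act1) = 5" | "piG P2 (act1, act1) = 5"
| "piG P1 (act1, act2) = 0" | "piG P2 (act1, act2) = 0"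
| "piG P1 (act2, act1) = 0" | "piG P2 (act2, act1) = 0"
| "piG P1 (act2, act2) = 5" | "piG P2 (act2, act2) = 10"

end

theory Submission
  imports Defs
begin

text \<open>The incumbent type has \<open>act1\<close> as a strictly dominant action, so in every post-entry
  equilibrium the incumbents keep playing \<open>(a\<^sub>1\<^sub>1, a\<^sub>2\<^sub>1)\<close>. Mutants entering one
  population alone then earn \<open>5 q\<close>, \<open>q\<close> being their probability of \<open>act1\<close> against
  incumbents, never more than the incumbents' \<open>5\<close>. When both populations are invaded, player-2
  mutants can profit only in the rare mutant-mutant matches ending in \<open>(a\<^sub>1\<^sub>2, a\<^sub>2\<^sub>2)\<close>;
  such matches require the mutants to miscoordinate or to leave \<open>act1\<close> against incumbents,
  which costs one of the two mutant populations more than these matches are worth. So for small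
  shares mutants can hold their ground only by playing \<open>act1\<close> throughout, and then all
  fitnesses are equal.

  A post-entry equilibrium with the incumbents' play unchanged exists: mutants reply to \<open>act1\<close>
  whenever they may meet an incumbent (for small shares this is also optimal when they do not
  observe), and when observing a mutant they play a fixed point of the two best-reply maps,
  obtained from the intermediate value theorem.\<close>

lemma sum_UNIV_act: "(\<Sum>a\<in>UNIV. f a) = f act1 + (f act2 :: real)"
  by (simp add: UNIV_act)

definition mixed :: "real \<Rightarrow> mix" where
  "mixed q = (\<lambda>a. if a = act1 then q else 1 - q)"

lemma mixed_apply [simp]: "mixed q act1 = q" "mixed q act2 = 1 - q"
  by (simp_all add: mixed_def)

lemma is_mix_mixed [simp]: "is_mix (mixed q) \<longleftrightarrow> 0 \<le> q \<and> q \<le> 1"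
  by (auto simp: is_mix_def sum_UNIV_act mixed_def)

lemma is_mix_iff: "is_mix x \<longleftrightarrow> x = mixed (x act1) \<and> 0 \<le> x act1 \<and> x act1 \<le> 1"
proof
  assume x: "is_mix x"
  then have "x act2 = 1 - x act1" and "0 \<le> x act1" "0 \<le> x act2"
    by (auto simp: is_mix_def sum_UNIV_act)
  moreover have "x a = mixed (x act1) a" for a
    using \<open>x act2 = 1 - x act1\<close> by (cases a) simp_all
  then have "x = mixed (x act1)" ..
  ultimately show "x = mixed (x act1) \<and> 0 \<le> x act1 \<and> x act1 \<le> 1" by simp
next
  assume "x = mixed (x act1) \<and> 0 \<le> x act1 \<and> x act1 \<le> 1"
  then show "is_mix x" by (metis is_mix_mixed)
qed

lemma all_mix_iff: "(\<forall>\<sigma>. is_mix \<sigma> \<longrightarrow> P (\<sigma> act1)) \<longleftrightarrow> (\<forall>q. 0 \<le> q \<longrightarrow> q \<le> 1 \<longrightarrow> P q)"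
  by (metis is_mix_iff is_mix_mixed mixed_apply(1))

lemma evm_mixed:
  "evm f (mixed x) (mixed y) = x*y * f (act1, act1) + x*(1-y) * f (act1, act2)
     + (1-x)*y * f (act2, act1) + (1-x)*(1-y) * f (act2, act2)"
  by (simp add: evm_def sum_UNIV_act)

definition util :: "pl \<Rightarrow> ty \<Rightarrow> real \<Rightarrow> real \<Rightarrow> real" where
  "util i th x y = evo i th (mixed x) (mixed y)"

definition act1_gain :: "pl \<Rightarrow> ty \<Rightarrow> real \<Rightarrow> real" where
  "act1_gain i th y = util i th 1 y - util i th 0 y"

lemma evo_mix: "is_mix x \<Longrightarrow> is_mix y \<Longrightarrow> evo i th x y = util i th (x act1) (y act1)"
  by (metis is_mix_iff util_def)

lemma util_affine_own: "util i th x y = util i th 0 y + x * act1_gain i th y"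
  by (cases i) (simp_all add: act1_gain_def util_def evo_def evm_mixed algebra_simps)

lemma util_affine_opp: "util i th x y = util i th x 0 + y * (util i th x 1 - util i th x 0)"
  by (cases i) (simp_all add: util_def evo_def evm_mixed algebra_simps)

lemma act1_gain_affine: "act1_gain i th y = act1_gain i th 0 + y * (act1_gain i th 1 - act1_gain i th 0)"
  by (simp add: act1_gain_def util_affine_opp[of i th _ y] algebra_simps)

lemma util_convex_opp:
  "a + c = 1 \<Longrightarrow> a * util i th x y + c * util i th x y' = util i th x (a * y + c * y')"
  by (subst (1 2 3) util_affine_opp) (simp add: algebra_simps flip: distrib_right)

lemma util_sum_opp:
  assumes "(\<Sum>t\<in>A. w t) = 1"
  shows "(\<Sum>t\<in>A. w t * util i th x (y t)) = util i th x (\<Sum>t\<in>A. w t * y t)"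
proof -
  let ?u0 = "util i th x 0" and ?d = "util i th x 1 - util i th x 0"
  have "(\<Sum>t\<in>A. w t * util i th x (y t)) = (\<Sum>t\<in>A. w t * ?u0 + (w t * y t) * ?d)"
    by (subst util_affine_opp) (simp add: algebra_simps)
  also have "\<dots> = (\<Sum>t\<in>A. w t) * ?u0 + (\<Sum>t\<in>A. w t * y t) * ?d"
    by (simp add: sum.distrib sum_distrib_right)
  also have "\<dots> = util i th x (\<Sum>t\<in>A. w t * y t)"
    using assms by (subst (2) util_affine_opp) simp
  finally show ?thesis .
qed

section \<open>Best replies\<close>

text \<open>\<open>x\<close> is the probability of \<open>act1\<close> and \<open>d\<close> the payoff advantage of \<open>act1\<close> over \<open>act2\<close>.\<close>
definition best_reply :: "real \<Rightarrow> real \<Rightarrow> bool" where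
  "best_reply d x \<longleftrightarrow> 0 \<le> x \<and> x \<le> 1 \<and> (0 < d \<longrightarrow> x = 1) \<and> (d < 0 \<longrightarrow> x = 0)"

lemma best_reply_iff_maximal:
  "best_reply d x \<longleftrightarrow> 0 \<le> x \<and> x \<le> 1 \<and> (\<forall>q. 0 \<le> q \<longrightarrow> q \<le> 1 \<longrightarrow> q * d \<le> x * d)"
proof (cases d "0::real" rule: linorder_cases)
  case less
  then show ?thesis
    by (auto simp: best_reply_def mult_nonneg_nonpos dest: spec[of _ 0])
next
  case greater
  then show ?thesis
    by (auto simp: best_reply_def mult_le_cancel_right dest: spec[of _ 1])
qed (simp add: best_reply_def)

lemma best_reply_pos: "0 < d \<Longrightarrow> best_reply d x \<longleftrightarrow> x = 1"
  by (auto simp: best_reply_def)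

lemma optimal_iff_best_reply:
  assumes "0 \<le> x" "x \<le> 1"
  shows "(\<forall>\<sigma>. is_mix \<sigma> \<longrightarrow> util i th (\<sigma> act1) y \<le> util i th x y) \<longleftrightarrow> best_reply (act1_gain i th y) x"
proof -
  let ?g = "act1_gain i th y"
  have "(\<forall>\<sigma>. is_mix \<sigma> \<longrightarrow> util i th (\<sigma> act1) y \<le> util i th x y)
      \<longleftrightarrow> (\<forall>\<sigma>. is_mix \<sigma> \<longrightarrow> \<sigma> act1 * ?g \<le> x * ?g)"
    by (subst (1 2) util_affine_own) simp
  also have "\<dots> \<longleftrightarrow> best_reply ?g x"
    using assms all_mix_iff[of "\<lambda>q. q * ?g \<le> x * ?g"] by (simp add: best_reply_iff_maximal)
  finally show ?thesis .
qed

lemma best_reply_exists: "\<exists>x. best_reply d x"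
  by (rule exI[of _ "if 0 < d then 1 else 0"]) (simp add: best_reply_def)

lemma best_reply_range: "best_reply d x \<Longrightarrow> x \<in> {0..1}"
  by (simp add: best_reply_def)

lemma best_reply_sgn_cong: "sgn d = sgn d' \<Longrightarrow> best_reply d x \<longleftrightarrow> best_reply d' x"
  by (simp add: best_reply_def sgn_if split: if_splits)

lemma continuous_sign_trichotomy:
  fixes f :: "real \<Rightarrow> real"
  assumes "continuous_on {0..1} f"
  shows "(\<exists>z\<in>{0..1}. f z = 0) \<or> (\<forall>y\<in>{0..1}. 0 < f y) \<or> (\<forall>y\<in>{0..1}. f y < 0)"
proof (rule ccontr)
  assume no: "\<not> ?thesis"
  then obtain a c where a: "a \<in> {0..1}" "f a < 0" and c: "c \<in> {0..1}" "0 < f c"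
    by (metis linorder_neqE_linordered_idom)
  have "\<exists>z\<in>{0..1}. f z = 0"
  proof (cases "a \<le> c")
    case True
    then show ?thesis
      using IVT'[of f a 0 c] a c continuous_on_subset[OF assms] by auto
  next
    case False
    then show ?thesis
      using IVT2'[of f a 0 c] a c continuous_on_subset[OF assms] by auto
  qed
  then show False
    using no by blast
qed

lemma continuous_root_or_constant_best_reply:
  fixes f :: "real \<Rightarrow> real"
  assumes "continuous_on {0..1} f"
  shows "(\<exists>z\<in>{0..1}. f z = 0) \<or> (\<exists>x. \<forall>y\<in>{0..1}. best_reply (f y) x)"
proof -
  have "best_reply d 1" if "0 < d" for d
    using that by (simp add: best_reply_def)
  moreover have "best_reply d 0" if "d < 0" for d
    using that by (simp add: best_reply_def)
  ultimately show ?thesis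
    using continuous_sign_trichotomy[OF assms] by blast
qed

lemma best_reply_fixed_point:
  fixes f g :: "real \<Rightarrow> real"
  assumes f: "continuous_on {0..1} f" and g: "continuous_on {0..1} g"
  shows "\<exists>x y. best_reply (f y) x \<and> best_reply (g x) y"
proof -
  consider (root_g) w where "w \<in> {0..1}" "g w = 0" | (const_g) y where "\<forall>x\<in>{0..1}. best_reply (g x) y"
    using continuous_root_or_constant_best_reply[OF g] by blast
  then show ?thesis
  proof cases
    case const_g
    moreover obtain x where "best_reply (f y) x"
      using best_reply_exists by blast
    ultimately show ?thesis
      using best_reply_range by blast
  next
    case root_g
    consider (root_f) z where "z \<in> {0..1}" "f z = 0" | (const_f) x where "\<forall>y\<in>{0..1}. best_reply (f y) x"
      using continuous_root_or_constant_best_reply[OF f] by blast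
    then show ?thesis
    proof cases
      case root_f
      with root_g have "best_reply (f z) w" "best_reply (g w) z"
        by (simp_all add: best_reply_def)
      then show ?thesis by blast
    next
      case const_f
      moreover obtain y where "best_reply (g x) y"
        using best_reply_exists by blast
      ultimately show ?thesis
        using best_reply_range by blast
    qed
  qed
qed

lemma affine_sign_near_one:
  fixes a c :: real
  assumes "a + c \<noteq> 0"
  shows "\<exists>\<delta>>0. \<forall>w. 1 - \<delta> \<le> w \<longrightarrow> w \<le> 1 \<longrightarrow> sgn (a + w * c) = sgn (a + c)"
proof -
  define \<delta> where "\<delta> = \<bar>a + c\<bar> / (\<bar>a + c\<bar> + \<bar>c\<bar>)"
  have pos: "0 < \<bar>a + c\<bar>"
    using assms by simp
  have "\<bar>c\<bar> / (\<bar>a + c\<bar> + \<bar>c\<bar>) < 1"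
    using pos by simp
  from mult_strict_left_mono[OF this pos]
  have \<delta>c: "\<delta> * \<bar>c\<bar> < \<bar>a + c\<bar>"
    by (simp add: \<delta>_def)
  have "sgn (a + w * c) = sgn (a + c)" if "1 - \<delta> \<le> w" "w \<le> 1" for w
  proof -
    have "(a + w * c) - (a + c) = - ((1 - w) * c)"
      by (simp add: algebra_simps)
    then have "\<bar>(a + w * c) - (a + c)\<bar> = (1 - w) * \<bar>c\<bar>"
      using that by (simp add: abs_mult)
    also have "\<dots> \<le> \<delta> * \<bar>c\<bar>"
      using that by (intro mult_right_mono) auto
    finally show ?thesis
      using \<delta>c by (auto simp: sgn_if)
  qed
  moreover have "0 < \<delta>"
    using pos by (simp add: \<delta>_def add_pos_nonneg)
  ultimately show ?thesis
    by blast
qed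

text \<open>If the advantage vanishes at 1, it has the sign of its value at 0 on all of \<open>[0, 1)\<close>.\<close>
lemma best_reply_near_one:
  fixes a c :: real
  shows "\<exists>\<delta>>0. \<exists>r. \<forall>w. 1 - \<delta> \<le> w \<longrightarrow> w \<le> 1 \<longrightarrow> best_reply (a + w * c) r"
proof (cases "a + c = 0")
  case True
  then have "a + w * c = (1 - w) * a" for w
    by (simp add: algebra_simps eq_neg_iff_add_eq_0[symmetric])
  then have "best_reply (a + w * c) (if 0 < a then 1 else 0)" if "w \<le> 1" for w
    using that by (auto simp: best_reply_def zero_less_mult_iff mult_less_0_iff)
  then show ?thesis
    by (intro exI[of _ 1]) auto
next
  case False
  obtain r where "best_reply (a + c) r"
    using best_reply_exists by blast
  then show ?thesis
    using affine_sign_near_one[OF False] best_reply_sgn_cong by metis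
qed

lemma other_other [simp]: "other (other i) = i"
  by (cases i) simp_all

lemma mt_other [simp]: "mt (other i) t' t = mt i t t'"
  by (cases i) (simp_all add: mt_def)

lemma pl_other_of_neq: "j \<noteq> k \<Longrightarrow> j = other k"
  by (cases j; cases k) simp_all

lemma nonempty_pl_set_cases:
  fixes J :: "pl set"
  assumes "J \<noteq> {}"
  obtains i where "J = {i}" | "J = UNIV"
proof (cases "J = UNIV")
  case False
  then obtain i k where i: "i \<in> J" and k: "k \<notin> J"
    using assms by blast
  have "j = other k" if "j \<in> J" for j
    using that k by (intro pl_other_of_neq) auto
  then have "J = {other k}"
    using i by blast
  then show ?thesis
    using that by blast
qed simp

definition act1_prob ::
    "real \<Rightarrow> (pl \<Rightarrow> ty \<times> ty \<Rightarrow> mix) \<Rightarrow> (pl \<Rightarrow> ty \<Rightarrow> mix) \<Rightarrow> pl \<Rightarrow> ty \<Rightarrow> ty \<Rightarrow> real" where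
  "act1_prob p b s i t t' = p * b i (mt i t t') act1 + (1 - p) * s i t act1"

lemma convex_comb_unit_interval:
  fixes p x y :: real
  assumes "0 \<le> p" "p \<le> 1" "0 \<le> x" "x \<le> 1" "0 \<le> y" "y \<le> 1"
  shows "0 \<le> p * x + (1 - p) * y \<and> p * x + (1 - p) * y \<le> 1"
proof -
  have "p * x \<le> p" "(1 - p) * y \<le> 1 - p"
    using assms by (simp_all add: mult_left_le)
  then show ?thesis
    using assms by simp
qed

lemma act1_prob_bounds:
  assumes "0 \<le> p" "p \<le> 1" "is_mix (b i (mt i t t'))" "is_mix (s i t)"
  shows "0 \<le> act1_prob p b s i t t'" "act1_prob p b s i t t' \<le> 1"
  using assms convex_comb_unit_interval[of p "b i (mt i t t') act1" "s i t act1"] is_mix_iff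
  by (simp_all add: act1_prob_def)

lemma act1_prob_lower:
  assumes "0 \<le> p" "is_mix (b i (mt i t t'))" "is_mix (b i (mt i t t''))"
  shows "act1_prob p b s i t t'' - p \<le> act1_prob p b s i t t'"
proof -
  have "p * b i (mt i t t'') act1 \<le> p" "0 \<le> p * b i (mt i t t') act1"
    using assms is_mix_iff by (simp_all add: mult_left_le)
  then show ?thesis
    by (simp add: act1_prob_def)
qed

definition strategies_mixed ::
    "(pl \<Rightarrow> ty \<Rightarrow> real) \<Rightarrow> (pl \<Rightarrow> ty \<times> ty \<Rightarrow> mix) \<Rightarrow> (pl \<Rightarrow> ty \<Rightarrow> mix) \<Rightarrow> bool" where
  "strategies_mixed mu b s \<longleftrightarrow>
     (\<forall>i t t'. t \<in> supp (mu i) \<longrightarrow> t' \<in> supp (mu (other i)) \<longrightarrow> is_mix (b i (mt i t t'))) \<and>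
     (\<forall>i t. t \<in> supp (mu i) \<longrightarrow> is_mix (s i t))"

lemma observed_payoff:
  assumes "strategies_mixed mu b s" "t \<in> supp (mu i)" "t' \<in> supp (mu (other i))" "is_mix \<sigma>"
  shows "p * evo i t \<sigma> (b (other i) (mt i t t')) + (1 - p) * evo i t \<sigma> (s (other i) t')
    = util i t (\<sigma> act1) (act1_prob p b s (other i) t' t)"
proof -
  have "is_mix (b (other i) (mt i t t'))" "is_mix (s (other i) t')"
    using assms(1-3) mt_other[of i t' t] unfolding strategies_mixed_def by (metis other_other)+
  then show ?thesis
    using assms(4) by (simp add: evo_mix util_convex_opp act1_prob_def)
qed

lemma blind_payoff:
  assumes "strategies_mixed mu b s" "t \<in> supp (mu i)" "is_mix \<sigma>"
    and "(\<Sum>t'\<in>supp (mu (other i)). mu (other i) t') = 1"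
  shows "(\<Sum>t'\<in>supp (mu (other i)). mu (other i) t' *
      (p * evo i t \<sigma> (b (other i) (mt i t t')) + (1 - p) * evo i t \<sigma> (s (other i) t')))
    = util i t (\<sigma> act1) (\<Sum>t'\<in>supp (mu (other i)). mu (other i) t' * act1_prob p b s (other i) t' t)"
  using assms by (simp add: observed_payoff util_sum_opp cong: sum.cong)

lemma is_eq_iff_best_replies:
  assumes mass: "\<And>i. (\<Sum>t\<in>supp (mu i). mu i t) = 1"
  shows "is_eq p mu b s \<longleftrightarrow> strategies_mixed mu b s \<and>
    (\<forall>i t t'. t \<in> supp (mu i) \<longrightarrow> t' \<in> supp (mu (other i)) \<longrightarrow>
       best_reply (act1_gain i t (act1_prob p b s (other i) t' t)) (b i (mt i t t') act1)) \<and>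
    (\<forall>i t. t \<in> supp (mu i) \<longrightarrow>
       best_reply (act1_gain i t (\<Sum>t'\<in>supp (mu (other i)). mu (other i) t' * act1_prob p b s (other i) t' t))
         (s i t act1))"
proof (cases "strategies_mixed mu b s")
  case False
  then show ?thesis
    by (auto simp: is_eq_def strategies_mixed_def)
next
  case mixed: True
  have b01: "0 \<le> b i (mt i t t') act1 \<and> b i (mt i t t') act1 \<le> 1"
    if "t \<in> supp (mu i)" "t' \<in> supp (mu (other i))" for i t t'
    using mixed that is_mix_iff unfolding strategies_mixed_def by blast
  have s01: "0 \<le> s i t act1 \<and> s i t act1 \<le> 1" if "t \<in> supp (mu i)" for i t
    using mixed that is_mix_iff unfolding strategies_mixed_def by blast
  have observed: "(\<forall>\<sigma>. is_mix \<sigma> \<longrightarrow>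
        p * evo i t \<sigma> (b (other i) (mt i t t')) + (1 - p) * evo i t \<sigma> (s (other i) t')
        \<le> p * evo i t (b i (mt i t t')) (b (other i) (mt i t t'))
          + (1 - p) * evo i t (b i (mt i t t')) (s (other i) t'))
      \<longleftrightarrow> best_reply (act1_gain i t (act1_prob p b s (other i) t' t)) (b i (mt i t t') act1)"
    if "t \<in> supp (mu i)" "t' \<in> supp (mu (other i))" for i t t'
    using that mixed b01[OF that] optimal_iff_best_reply
    by (simp add: observed_payoff strategies_mixed_def)
  have blind: "(\<forall>\<sigma>. is_mix \<sigma> \<longrightarrow>
        (\<Sum>t'\<in>supp (mu (other i)). mu (other i) t' *
           (p * evo i t \<sigma> (b (other i) (mt i t t')) + (1 - p) * evo i t \<sigma> (s (other i) t')))
        \<le> (\<Sum>t'\<in>supp (mu (other i)). mu (other i) t' *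
           (p * evo i t (s i t) (b (other i) (mt i t t')) + (1 - p) * evo i t (s i t) (s (other i) t'))))
      \<longleftrightarrow> best_reply (act1_gain i t (\<Sum>t'\<in>supp (mu (other i)). mu (other i) t' * act1_prob p b s (other i) t' t))
            (s i t act1)"
    if "t \<in> supp (mu i)" for i t
    using that mixed s01[OF that] mass optimal_iff_best_reply
    by (simp add: blind_payoff strategies_mixed_def)
  show ?thesis
    using mixed unfolding is_eq_def
    by (simp add: observed blind strategies_mixed_def) blast
qed

text \<open>Observation is independent across the two players, so the expected payoff over the four
  observation patterns is the bilinear payoff of the two players' averaged strategies.\<close>
lemma eo_mixed:
  assumes "b P1 th = mixed x1" "b P2 th = mixed x2" "s P1 (fst th) = mixed y1" "s P2 (snd th) = mixed y2"
  shows "eo p b s th f = evm f (mixed (p * x1 + (1 - p) * y1)) (mixed (p * x2 + (1 - p) * y2))"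
  using assms by (simp add: eo_def evm_mixed power2_eq_square algebra_simps)

lemma eo_mt:
  assumes "is_mix (b i (mt i t t'))" "is_mix (b (other i) (mt i t t'))"
    and "is_mix (s i t)" "is_mix (s (other i) t')"
  shows "eo p b s (mt i t t') f
    = evo i f (mixed (act1_prob p b s i t t')) (mixed (act1_prob p b s (other i) t' t))"
  using assms is_mix_iff[of "b i (mt i t t')"] is_mix_iff[of "b (other i) (mt i t t')"]
    is_mix_iff[of "s i t"] is_mix_iff[of "s (other i) t'"]
  by (cases i) (simp_all add: mt_def act1_prob_def evo_def eo_mixed)

definition incumbent :: ty where
  "incumbent = (\<lambda>(a, c). (if a = act1 then 1 else 0) + (if c = act1 then 1 else 0))"

lemma act1_gain_incumbent [simp]: "act1_gain i incumbent y = 1"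
  by (cases i) (simp_all add: act1_gain_def util_def evo_def evm_mixed incumbent_def)

lemma incumbent_plays_act1:
  assumes mass: "\<And>i. (\<Sum>t\<in>supp (mu i). mu i t) = 1"
    and eq: "is_eq p mu b s" and inc: "incumbent \<in> supp (mu i)"
  shows "s i incumbent = mixed 1"
    and "t' \<in> supp (mu (other i)) \<Longrightarrow> b i (mt i incumbent t') = mixed 1"
  using eq inc unfolding is_eq_iff_best_replies[OF mass] strategies_mixed_def
  by (metis act1_gain_incumbent best_reply_pos is_mix_iff zero_less_one)+

definition mu_inc :: "pl \<Rightarrow> ty \<Rightarrow> real" where
  "mu_inc i t = (if t = incumbent then 1 else 0)"

lemma supp_mu_inc [simp]: "supp (mu_inc i) = {incumbent}"
  by (auto simp: supp_def mu_inc_def)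

definition mutant_share :: "pl set \<Rightarrow> (pl \<Rightarrow> real) \<Rightarrow> pl \<Rightarrow> real" where
  "mutant_share J eps i = (if i \<in> J then eps i else 0)"

locale mutant_entry =
  fixes J :: "pl set" and mut :: "pl \<Rightarrow> ty" and eps :: "pl \<Rightarrow> real"
  assumes mutant_entry: "j \<in> J \<Longrightarrow> mut j \<noteq> incumbent \<and> 0 < eps j \<and> eps j < 1"
begin

abbreviation mu_post :: "pl \<Rightarrow> ty \<Rightarrow> real" where
  "mu_post \<equiv> post mu_inc J mut eps"

abbreviation share :: "pl \<Rightarrow> real" where
  "share \<equiv> mutant_share J eps"

lemma share_bounds: "0 \<le> share i" "share i < 1"
  using mutant_entry[of i] by (auto simp: mutant_share_def)

lemma share_outside: "i \<notin> J \<Longrightarrow> share i = 0"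
  by (simp add: mutant_share_def)

lemma mu_post_apply:
  "mu_post i t = (1 - share i) * (if t = incumbent then 1 else 0) + share i * (if t = mut i then 1 else 0)"
  by (simp add: post_def mutant_share_def mu_inc_def)

lemma supp_post: "supp (mu_post i) = (if i \<in> J then {incumbent, mut i} else {incumbent})"
  using mutant_entry[of i] by (auto simp: supp_def mu_post_apply mutant_share_def)

lemma sum_post:
  "(\<Sum>t\<in>supp (mu_post i). mu_post i t * f t) = (1 - share i) * f incumbent + share i * f (mut i)"
  using mutant_entry[of i]
  by (cases "i \<in> J") (auto simp: supp_post mu_post_apply mutant_share_def)

lemma mass_post: "(\<Sum>t\<in>supp (mu_post i). mu_post i t) = 1"
  using sum_post[of i "\<lambda>_. 1"] by simp

lemma incumbent_in_supp [simp]: "incumbent \<in> supp (mu_post i)"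
  by (simp add: supp_post)

lemma mutant_in_supp: "i \<in> J \<Longrightarrow> mut i \<in> supp (mu_post i)"
  by (simp add: supp_post)

lemma supp_post_cases: "t \<in> supp (mu_post i) \<Longrightarrow> t = incumbent \<or> i \<in> J \<and> t = mut i"
  by (auto simp: supp_post split: if_splits)

lemma fitness_post:
  fixes p :: real
  assumes "strategies_mixed mu_post b s" "t \<in> supp (mu_post i)"
  defines "P \<equiv> act1_prob p b s"
  shows "fitness pay p mu_post b s i t
    = (1 - share (other i)) * evo i (pay i) (mixed (P i t incumbent)) (mixed (P (other i) incumbent t))
      + share (other i) * evo i (pay i) (mixed (P i t (mut (other i))))
          (mixed (P (other i) (mut (other i)) t))"
proof -
  have "eo p b s (mt i t t') (pay i) = evo i (pay i) (mixed (P i t t')) (mixed (P (other i) t' t))"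
    if "t' \<in> supp (mu_post (other i))" for t'
    using assms(1,2) that unfolding strategies_mixed_def P_def
    by (intro eo_mt) (metis other_other mt_other)+
  then show ?thesis
    unfolding fitness_def sum_post
    by (cases "other i \<in> J") (simp_all add: mutant_in_supp share_outside)
qed

lemma balanced_if_ties:
  assumes "\<forall>i\<in>J. fitness pay p mu_post b s i incumbent = fitness pay p mu_post b s i (mut i)"
  shows "balanced pay p mu_post b s"
  using assms unfolding balanced_def by (metis supp_post_cases)

lemmas is_eq_post_iff = is_eq_iff_best_replies[where mu = mu_post, OF mass_post]

lemma is_eq_post_mixed: "is_eq p mu_post b s \<Longrightarrow> strategies_mixed mu_post b s"
  by (simp add: is_eq_post_iff)

lemma incumbent_act1_prob:
  assumes "is_eq p mu_post b s" "t' \<in> supp (mu_post (other i))"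
  shows "act1_prob p b s i incumbent t' = 1"
  using incumbent_plays_act1[where mu = mu_post, OF mass_post assms(1) incumbent_in_supp] assms(2)
  by (simp add: act1_prob_def)

end

section \<open>Mutants cannot invade the coordination game\<close>

lemma evo_piG:
  "evo i (piG i) (mixed x) (mixed y)
    = 5 * (x * y + (1 - x) * (1 - y)) + (if i = P2 then 5 * ((1 - x) * (1 - y)) else 0)"
  by (cases i) (simp_all add: evo_def evm_mixed algebra_simps)

text \<open>In a match of two mutants playing \<open>act1\<close> with probabilities \<open>z\<^sub>1, z\<^sub>2\<close>, the outcome
  \<open>(a\<^sub>1\<^sub>2, a\<^sub>2\<^sub>2)\<close> is bounded by the miscoordination plus the player-1 mutants' deficit
  \<open>1 - q\<^sub>1\<close> against incumbents, because their unobserved play enters both \<open>z\<^sub>1\<close> and \<open>q\<^sub>1\<close>.\<close>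
lemma act2_coordination_bound:
  fixes p q1 z1 z2 :: real
  assumes "0 \<le> p" "p \<le> 1" "0 \<le> z1" "z1 \<le> 1" "0 \<le> z2" "z2 \<le> 1" "q1 - p \<le> z1" "q1 \<le> 1"
  shows "(1 - p) * ((1 - z1) * (1 - z2)) \<le> (z1 * (1 - z2) + (1 - z1) * z2) + (1 - q1)"
proof -
  have "(1 - p) * ((1 - z1) * (1 - z2)) \<le> (1 - p) * (1 - z2)"
    using assms by (intro mult_left_mono) (auto simp: mult_left_le_one_le)
  also have "\<dots> \<le> (z1 + (1 - q1)) * (1 - z2)"
    using assms by (intro mult_right_mono) auto
  also have "\<dots> = z1 * (1 - z2) + (1 - q1) * (1 - z2)"
    by (simp add: algebra_simps)
  also have "\<dots> \<le> (z1 * (1 - z2) + (1 - z1) * z2) + (1 - q1)"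
  proof -
    have "(1 - q1) * (1 - z2) \<le> 1 - q1" "0 \<le> (1 - z1) * z2"
      using assms by (simp_all add: mult_left_le)
    then show ?thesis by simp
  qed
  finally show ?thesis .
qed

text \<open>The deficits \<open>u, v\<close> of the two mutant populations against incumbents, their miscoordination
  \<open>m\<close> and their coordination \<open>P\<close> on \<open>(a\<^sub>1\<^sub>2, a\<^sub>2\<^sub>2)\<close> when neither population of mutants
  loses fitness: the gain \<open>P\<close> of the player-2 mutants is paid for by \<open>u\<close> and \<open>m\<close>, which are
  themselves bounded by \<open>v\<close>, and for small shares this forces everything to vanish.\<close>
lemma no_joint_invasion_deficits:
  fixes p e1 e2 u v m P :: real
  assumes p: "0 \<le> p" and e1: "0 < e1" "e1 < (1 - p) / 4" and e2: "0 < e2" "e2 < (1 - p) / 4"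
    and nonneg: "0 \<le> u" "0 \<le> v" "0 \<le> m" "0 \<le> P" and P_bound: "(1 - p) * P \<le> m + u"
    and H1: "(1 - e2) * u + e2 * m \<le> e2 * v" and H2: "(1 - e1) * v + e1 * m \<le> e1 * (P + u)"
  shows "u = 0 \<and> v = 0 \<and> m = 0 \<and> P = 0"
proof -
  have "0 \<le> (1 - e2) * u" "0 \<le> e2 * m" "0 \<le> e1 * m"
    using nonneg e1 e2 p by simp_all
  then have "e2 * m \<le> e2 * v"
    using H1 by linarith
  then have m_v: "m \<le> v"
    using e2 by (simp add: mult_le_cancel_left_pos)
  have "(1 - e2) * u \<le> e2 * v"
    using H1 \<open>0 \<le> e2 * m\<close> by linarith
  also have "\<dots> \<le> (1 - e2) * v"
    using nonneg e2 p by (intro mult_right_mono) auto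
  finally have u_v: "u \<le> v"
    using e2 p by (simp add: mult_le_cancel_left_pos)
  have "(1 - e1) * v \<le> e1 * (P + u)"
    using H2 \<open>0 \<le> e1 * m\<close> by linarith
  then have "(1 - p) * ((1 - e1) * v) \<le> (1 - p) * (e1 * (P + u))"
    using e1 p by (intro mult_left_mono) auto
  also have "\<dots> = e1 * ((1 - p) * P + (1 - p) * u)"
    by (simp add: algebra_simps)
  also have "\<dots> \<le> e1 * (3 * v)"
  proof -
    have "(1 - p) * u \<le> u"
      using nonneg p by (simp add: algebra_simps)
    then show ?thesis
      using P_bound m_v u_v e1 by (intro mult_left_mono) auto
  qed
  finally have "((1 - p) * (1 - e1) - 3 * e1) * v \<le> 0"
    by (simp add: algebra_simps)
  moreover have "0 < (1 - p) * (1 - e1) - 3 * e1"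
  proof -
    have "(1 - p) * e1 \<le> e1"
      using e1 p by (simp add: algebra_simps)
    then show ?thesis
      using e1 by (simp add: algebra_simps)
  qed
  ultimately have "v = 0"
    using nonneg by (simp add: mult_le_0_iff)
  then have "u = 0" "m = 0"
    using u_v m_v nonneg by auto
  moreover have "P = 0"
    using P_bound nonneg e1 p \<open>u = 0\<close> \<open>m = 0\<close> by (simp add: mult_le_0_iff)
  ultimately show ?thesis
    using \<open>v = 0\<close> by blast
qed

lemma no_joint_invasion:
  fixes p e1 e2 q1 q2 z1 z2 :: real
  assumes p: "0 \<le> p" and e1: "0 < e1" "e1 < (1 - p) / 4" and e2: "0 < e2" "e2 < (1 - p) / 4"
    and q: "q1 \<le> 1" "q2 \<le> 1" and z: "0 \<le> z1" "z1 \<le> 1" "0 \<le> z2" "z2 \<le> 1"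
    and z1_q1: "q1 - p \<le> z1"
    and H1: "(1 - e2) + e2 * q2 \<le> (1 - e2) * q1 + e2 * (z1 * z2 + (1 - z1) * (1 - z2))"
    and H2: "(1 - e1) + e1 * q1 \<le> (1 - e1) * q2 + e1 * (z1 * z2 + (1 - z1) * (1 - z2) + (1 - z1) * (1 - z2))"
  shows "q1 = 1 \<and> q2 = 1 \<and> z1 = 1 \<and> z2 = 1"
proof -
  define u v m P where "u = 1 - q1" and "v = 1 - q2"
    and "m = z1 * (1 - z2) + (1 - z1) * z2" and "P = (1 - z1) * (1 - z2)"
  have "0 \<le> u" "0 \<le> v" "0 \<le> m" "0 \<le> P"
    using q z by (simp_all add: u_def v_def m_def P_def)
  moreover have "(1 - p) * P \<le> m + u"
    using act2_coordination_bound[OF p _ z z1_q1 q(1)] e1 by (simp add: u_def m_def P_def)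
  moreover have "(1 - e2) * u + e2 * m \<le> e2 * v" "(1 - e1) * v + e1 * m \<le> e1 * (P + u)"
    using H1 H2 by (simp_all add: u_def v_def m_def P_def algebra_simps)
  ultimately have "u = 0 \<and> v = 0 \<and> m = 0 \<and> P = 0"
    by (rule no_joint_invasion_deficits[OF p e1 e2])
  then show ?thesis
    by (auto simp: u_def v_def m_def P_def)
qed

context mutant_entry
begin

lemma fitness_incumbent:
  assumes "is_eq p mu_post b s"
  shows "fitness piG p mu_post b s i incumbent
    = 5 * ((1 - share (other i)) + share (other i) * act1_prob p b s (other i) (mut (other i)) incumbent)"
proof -
  have mixed: "strategies_mixed mu_post b s"
    using assms(1) by (rule is_eq_post_mixed)
  show ?thesis
  proof (cases "other i \<in> J")
    case True
    then show ?thesis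
      using assms by (simp add: fitness_post[OF mixed] incumbent_act1_prob mutant_in_supp evo_piG)
  next
    case False
    then show ?thesis
      using assms by (simp add: fitness_post[OF mixed] incumbent_act1_prob share_outside evo_piG)
  qed
qed

lemma fitness_mutant:
  assumes "is_eq p mu_post b s" "i \<in> J"
  defines "P \<equiv> act1_prob p b s"
  shows "fitness piG p mu_post b s i (mut i)
    = (1 - share (other i)) * (5 * P i (mut i) incumbent)
      + share (other i) * evo i (piG i) (mixed (P i (mut i) (mut (other i))))
          (mixed (P (other i) (mut (other i)) (mut i)))"
proof -
  have mixed: "strategies_mixed mu_post b s"
    using assms(1) by (rule is_eq_post_mixed)
  have "P (other i) incumbent (mut i) = 1"
    using assms incumbent_act1_prob[of p b s "mut i" "other i"] mutant_in_supp by simp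
  then show ?thesis
    using assms by (simp add: fitness_post[OF mixed] mutant_in_supp evo_piG)
qed

lemma mutant_act1_prob_bounds:
  assumes "0 \<le> p" "p \<le> 1" and eq: "is_eq p mu_post b s" and "i \<in> J"
  shows "act1_prob p b s i (mut i) incumbent \<le> 1"
    and "other i \<in> J \<Longrightarrow> 0 \<le> act1_prob p b s i (mut i) (mut (other i))
      \<and> act1_prob p b s i (mut i) (mut (other i)) \<le> 1
      \<and> act1_prob p b s i (mut i) incumbent - p \<le> act1_prob p b s i (mut i) (mut (other i))"
proof -
  have mixed: "strategies_mixed mu_post b s"
    using eq by (rule is_eq_post_mixed)
  have b_mixed: "is_mix (b i (mt i (mut i) t'))" if "t' \<in> supp (mu_post (other i))" for t'
    using mixed that mutant_in_supp[OF \<open>i \<in> J\<close>] unfolding strategies_mixed_def by blast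
  have s_mixed: "is_mix (s i (mut i))"
    using mixed mutant_in_supp[OF \<open>i \<in> J\<close>] unfolding strategies_mixed_def by blast
  show "act1_prob p b s i (mut i) incumbent \<le> 1"
    using act1_prob_bounds assms(1,2) b_mixed s_mixed by simp
  show "0 \<le> act1_prob p b s i (mut i) (mut (other i))
      \<and> act1_prob p b s i (mut i) (mut (other i)) \<le> 1
      \<and> act1_prob p b s i (mut i) incumbent - p \<le> act1_prob p b s i (mut i) (mut (other i))"
    if "other i \<in> J"
    using act1_prob_bounds act1_prob_lower assms(1,2) b_mixed s_mixed mutant_in_supp[OF that] by simp
qed

lemma lone_mutants_not_fitter:
  assumes "0 \<le> p" "p \<le> 1" and eq: "is_eq p mu_post b s" and J: "J = {i}"
  shows "fitness piG p mu_post b s i (mut i) \<le> fitness piG p mu_post b s i incumbent"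
proof -
  have i: "i \<in> J"
    using J by simp
  have "share (other i) = 0"
    using J by (intro share_outside) (cases i; simp)
  moreover have "act1_prob p b s i (mut i) incumbent \<le> 1"
    by (rule mutant_act1_prob_bounds(1)[OF assms(1-3) i])
  ultimately show ?thesis
    by (simp add: fitness_incumbent[OF eq] fitness_mutant[OF eq i])
qed

lemma joint_mutants_lose_or_tie:
  assumes p: "0 \<le> p" and small: "\<And>j. j \<in> J \<Longrightarrow> eps j < (1 - p) / 4"
    and J: "J = UNIV" and eq: "is_eq p mu_post b s"
  defines "F \<equiv> fitness piG p mu_post b s"
  shows "(\<exists>j\<in>J. F j incumbent > F j (mut j)) \<or> (\<forall>j\<in>J. F j incumbent = F j (mut j))"
proof (cases "\<exists>j\<in>J. F j incumbent > F j (mut j)")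
  case no_loser: False
  define q where "q i = act1_prob p b s i (mut i) incumbent" for i
  define z where "z i = act1_prob p b s i (mut i) (mut (other i))" for i
  have p1: "p \<le> 1"
    using J small[of P1] mutant_entry[of P1] by simp
  have eps: "0 < eps i" "eps i < (1 - p) / 4" for i
    using J mutant_entry small by auto
  have q_le: "q i \<le> 1" and z_bounds: "0 \<le> z i \<and> z i \<le> 1 \<and> q i - p \<le> z i" for i
    unfolding q_def z_def using mutant_act1_prob_bounds[OF p p1 eq] J by simp_all
  have iJ: "i \<in> J" and shares: "share i = eps i" for i
    using J by (simp_all add: mutant_share_def)
  have F_inc: "F i incumbent = 5 * ((1 - eps (other i)) + eps (other i) * q (other i))"
    and F_mut: "F i (mut i) = (1 - eps (other i)) * (5 * q i)
      + eps (other i) * evo i (piG i) (mixed (z i)) (mixed (z (other i)))" for i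
    using fitness_incumbent[OF eq] fitness_mutant[OF eq iJ] by (simp_all add: F_def q_def z_def shares)
  have "F P1 incumbent \<le> F P1 (mut P1)" "F P2 incumbent \<le> F P2 (mut P2)"
    using no_loser J by (auto simp: not_less)
  then have "q P1 = 1 \<and> q P2 = 1 \<and> z P1 = 1 \<and> z P2 = 1"
    using q_le z_bounds
    by (intro no_joint_invasion[OF p eps(1,2)[of P1] eps(1,2)[of P2]])
      (simp_all add: F_inc F_mut evo_piG algebra_simps)
  then have "F j incumbent = F j (mut j)" for j
    using F_inc F_mut by (cases j) (simp_all add: evo_piG)
  then show ?thesis
    by blast
qed simp

lemma post_entry_selection:
  assumes p: "0 \<le> p" and small: "\<And>j. j \<in> J \<Longrightarrow> eps j < (1 - p) / 4"
    and J: "J \<noteq> {}" and eq: "is_eq p mu_post b s"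
  shows "(\<exists>j\<in>J. \<forall>t\<in>supp (mu_inc j). fitness piG p mu_post b s j t > fitness piG p mu_post b s j (mut j))
    \<or> balanced piG p mu_post b s"
proof -
  have "p \<le> 1"
    using J small mutant_entry by fastforce
  have "(\<exists>j\<in>J. fitness piG p mu_post b s j incumbent > fitness piG p mu_post b s j (mut j))
      \<or> (\<forall>j\<in>J. fitness piG p mu_post b s j incumbent = fitness piG p mu_post b s j (mut j))"
  proof (cases rule: nonempty_pl_set_cases[OF J])
    case (1 i)
    then show ?thesis
      using lone_mutants_not_fitter[OF p \<open>p \<le> 1\<close> eq] by fastforce
  next
    case 2
    then show ?thesis
      using joint_mutants_lose_or_tie[OF p small _ eq] by blast
  qed
  then show ?thesis
    using balanced_if_ties by auto
qed

end

section \<open>A post-entry equilibrium with unchanged incumbent play\<close>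

definition from_view :: "(pl \<Rightarrow> ty \<Rightarrow> ty \<Rightarrow> mix) \<Rightarrow> pl \<Rightarrow> ty \<times> ty \<Rightarrow> mix" where
  "from_view f i th = (if i = P1 then f i (fst th) (snd th) else f i (snd th) (fst th))"

lemma from_view_mt [simp]: "from_view f i (mt i t t') = f i t t'"
  by (cases i) (simp_all add: from_view_def mt_def)

definition entry_b :: "(pl \<Rightarrow> real) \<Rightarrow> (pl \<Rightarrow> real) \<Rightarrow> pl \<Rightarrow> ty \<times> ty \<Rightarrow> mix" where
  "entry_b r \<gamma> = from_view (\<lambda>i t t'. if t = incumbent then mixed 1
     else if t' = incumbent then mixed (r i) else mixed (\<gamma> i))"

definition entry_s :: "(pl \<Rightarrow> real) \<Rightarrow> pl \<Rightarrow> ty \<Rightarrow> mix" where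
  "entry_s r i t = (if t = incumbent then mixed 1 else mixed (r i))"

lemma entry_b_mt:
  "entry_b r \<gamma> i (mt i t t')
    = (if t = incumbent then mixed 1 else if t' = incumbent then mixed (r i) else mixed (\<gamma> i))"
  by (simp add: entry_b_def)

lemma act1_prob_entry:
  "act1_prob p (entry_b r \<gamma>) (entry_s r) i t t'
    = (if t = incumbent then 1 else if t' = incumbent then r i else p * \<gamma> i + (1 - p) * r i)"
  by (simp add: act1_prob_def entry_b_mt entry_s_def algebra_simps)

context mutant_entry
begin

lemma entry_blind_act1_prob:
  assumes p: "0 \<le> p" "p \<le> 1" and i: "i \<in> J"
    and r01: "\<And>j. j \<in> J \<Longrightarrow> 0 \<le> r j \<and> r j \<le> 1" and \<gamma>01: "\<And>j. 0 \<le> \<gamma> j \<and> \<gamma> j \<le> 1"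
  defines "w \<equiv> \<Sum>t'\<in>supp (mu_post (other i)).
    mu_post (other i) t' * act1_prob p (entry_b r \<gamma>) (entry_s r) (other i) t' (mut i)"
  shows "1 - share (other i) \<le> w \<and> w \<le> 1"
proof (cases "other i \<in> J")
  case True
  define Y where "Y = act1_prob p (entry_b r \<gamma>) (entry_s r) (other i) (mut (other i)) (mut i)"
  have "mut i \<noteq> incumbent" "mut (other i) \<noteq> incumbent"
    using i True mutant_entry by blast+
  then have "0 \<le> Y \<and> Y \<le> 1" and w: "w = (1 - share (other i)) + share (other i) * Y"
    using True p r01 \<gamma>01 convex_comb_unit_interval
    by (simp_all add: Y_def w_def act1_prob_entry sum_post)
  moreover have "0 \<le> share (other i)"
    by (rule share_bounds)
  ultimately show ?thesis
    by (simp add: mult_left_le)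
next
  case False
  then show ?thesis
    using i mutant_entry by (simp add: w_def sum_post act1_prob_entry share_outside)
qed

lemma entry_profile_is_eq:
  assumes p: "0 \<le> p" "p \<le> 1"
    and r: "\<And>i w. i \<in> J \<Longrightarrow> 1 - share (other i) \<le> w \<Longrightarrow> w \<le> 1 \<Longrightarrow> best_reply (act1_gain i (mut i) w) (r i)"
    and \<gamma>: "\<And>i. best_reply (act1_gain i (mut i) (p * \<gamma> (other i) + (1 - p) * r (other i))) (\<gamma> i)"
  shows "is_eq p mu_post (entry_b r \<gamma>) (entry_s r)"
proof -
  have r01: "0 \<le> r i \<and> r i \<le> 1" if "i \<in> J" for i
    using r[OF that, of 1] share_bounds by (simp add: best_reply_def)
  have \<gamma>01: "0 \<le> \<gamma> i \<and> \<gamma> i \<le> 1" for i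
    using \<gamma>[of i] by (simp add: best_reply_def)
  let ?P = "act1_prob p (entry_b r \<gamma>) (entry_s r)"
  show ?thesis
    unfolding is_eq_post_iff strategies_mixed_def
  proof (intro conjI allI impI)
    fix i t t'
    assume t: "t \<in> supp (mu_post i)" and t': "t' \<in> supp (mu_post (other i))"
    show "is_mix (entry_b r \<gamma> i (mt i t t'))"
      using supp_post_cases[OF t] r01 \<gamma>01 by (auto simp: entry_b_mt)
    consider (inc) "t = incumbent"
      | (mut_inc) "i \<in> J" "t = mut i" "t' = incumbent"
      | (mut_mut) "i \<in> J" "t = mut i" "other i \<in> J" "t' = mut (other i)"
      using supp_post_cases[OF t] supp_post_cases[OF t'] by blast
    then show "best_reply (act1_gain i t (?P (other i) t' t)) (entry_b r \<gamma> i (mt i t t') act1)"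
    proof cases
      case inc
      then show ?thesis
        by (simp add: entry_b_mt best_reply_pos)
    next
      case mut_inc
      then show ?thesis
        using mutant_entry[of i] r[of i 1] share_bounds by (simp add: entry_b_mt act1_prob_entry)
    next
      case mut_mut
      then show ?thesis
        using mutant_entry[of i] mutant_entry[of "other i"] \<gamma>[of i]
        by (simp add: entry_b_mt act1_prob_entry)
    qed
  next
    fix i t
    assume t: "t \<in> supp (mu_post i)"
    show "is_mix (entry_s r i t)"
      using supp_post_cases[OF t] r01 by (auto simp: entry_s_def)
    show "best_reply (act1_gain i t (\<Sum>t'\<in>supp (mu_post (other i)). mu_post (other i) t' * ?P (other i) t' t))
      (entry_s r i t act1)"
      using supp_post_cases[OF t] r entry_blind_act1_prob[where r = r and \<gamma> = \<gamma>, OF p _ r01 \<gamma>01]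
      by (auto simp: entry_s_def best_reply_def)
  qed
qed

end

lemma (in mutant_entry) post_entry_equilibrium:
  assumes p: "0 \<le> p" "p \<le> 1"
    and r: "\<And>i w. i \<in> J \<Longrightarrow> 1 - share (other i) \<le> w \<Longrightarrow> w \<le> 1 \<Longrightarrow> best_reply (act1_gain i (mut i) w) (r i)"
  shows "\<exists>b s. is_eq p mu_post b s
    \<and> (\<forall>i. b i (incumbent, incumbent) = mixed 1) \<and> (\<forall>i. s i incumbent = mixed 1)"
proof -
  have cont: "continuous_on {0..1} (\<lambda>y. act1_gain i (mut i) (p * y + c))" for i c
    by (subst act1_gain_affine) (intro continuous_intros)
  obtain x y where xy:
    "best_reply (act1_gain P1 (mut P1) (p * y + (1 - p) * r P2)) x"
    "best_reply (act1_gain P2 (mut P2) (p * x + (1 - p) * r P1)) y"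
    using best_reply_fixed_point[OF cont cont] by blast
  define \<gamma> where "\<gamma> i = (if i = P1 then x else y)" for i
  have "best_reply (act1_gain i (mut i) (p * \<gamma> (other i) + (1 - p) * r (other i))) (\<gamma> i)" for i
    using xy by (cases i) (simp_all add: \<gamma>_def)
  then have "is_eq p mu_post (entry_b r \<gamma>) (entry_s r)"
    using entry_profile_is_eq[OF p r] by blast
  moreover have "entry_b r \<gamma> i (incumbent, incumbent) = mixed 1" for \<gamma> i
    using entry_b_mt[of r \<gamma> i incumbent incumbent] by (cases i) (simp_all add: mt_def)
  ultimately show ?thesis
    by (intro exI[of _ "entry_b r \<gamma>"] exI[of _ "entry_s r"]) (auto simp: entry_s_def)
qed

lemma pop_state_mu_inc: "pop_state mu_inc"
  by (simp add: pop_state_def fin_dist_def mu_inc_def)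

lemma is_eq_mu_inc: "is_eq p mu_inc (\<lambda>_ _. mixed 1) (\<lambda>_ _. mixed 1)"
  by (subst is_eq_iff_best_replies) (simp_all add: mu_inc_def strategies_mixed_def best_reply_pos)

lemma agg_mu_inc: "agg p mu_inc (\<lambda>_ _. mixed 1) (\<lambda>_ _. mixed 1) c = (if c = (act1, act1) then 1 else 0)"
proof -
  have "agg p mu_inc (\<lambda>_ _. mixed 1) (\<lambda>_ _. mixed 1) c
      = (p\<^sup>2 + 2 * (p * (1 - p)) + (1 - p)\<^sup>2) * (if c = (act1, act1) then 1 else 0)"
    by (simp add: agg_def mu_inc_def eo_def evm_mixed algebra_simps)
  also have "p\<^sup>2 + 2 * (p * (1 - p)) + (1 - p)\<^sup>2 = 1"
    by (simp add: power2_eq_square algebra_simps)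
  finally show ?thesis by simp
qed

lemma mdist_self [simp]: "mdist x x = 0"
  by (simp add: mdist_def)

lemma uniform_best_replies_near_one:
  fixes c :: real and mut :: "pl \<Rightarrow> ty"
  assumes "0 < c"
  shows "\<exists>\<epsilon> r. 0 < \<epsilon> \<and> \<epsilon> \<le> c \<and>
    (\<forall>i w. 1 - \<epsilon> \<le> w \<longrightarrow> w \<le> 1 \<longrightarrow> best_reply (act1_gain i (mut i) w) (r i))"
proof -
  have "\<forall>i. \<exists>\<delta>>0. \<exists>r. \<forall>w. 1 - \<delta> \<le> w \<longrightarrow> w \<le> 1 \<longrightarrow> best_reply (act1_gain i (mut i) w) r"
    using best_reply_near_one by (subst act1_gain_affine) blast
  then obtain \<delta> r where
    \<delta>r: "\<forall>i. 0 < \<delta> i \<and> (\<forall>w. 1 - \<delta> i \<le> w \<longrightarrow> w \<le> 1 \<longrightarrow> best_reply (act1_gain i (mut i) w) (r i))"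
    by metis
  define \<epsilon> where "\<epsilon> = min c (min (\<delta> P1) (\<delta> P2))"
  have "\<epsilon> \<le> \<delta> i" for i
    by (cases i) (simp_all add: \<epsilon>_def)
  then have "best_reply (act1_gain i (mut i) w) (r i)" if "1 - \<epsilon> \<le> w" "w \<le> 1" for i w
    using that \<delta>r by (meson diff_left_mono order_trans)
  moreover have "0 < \<epsilon>" "\<epsilon> \<le> c"
    using assms \<delta>r by (simp_all add: \<epsilon>_def)
  ultimately show ?thesis
    by blast
qed

text \<open>Incumbents play \<open>act1\<close> in every post-entry equilibrium, so the strategy distance \<open>0\<close>
  already works.\<close>
lemma (in mutant_entry) post_entry_resisted:
  assumes p: "0 < p" "p < 1" and J: "J \<noteq> {}" and small: "\<And>j. j \<in> J \<Longrightarrow> eps j < (1 - p) / 4"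
    and r: "\<And>i w. i \<in> J \<Longrightarrow> 1 - share (other i) \<le> w \<Longrightarrow> w \<le> 1 \<Longrightarrow> best_reply (act1_gain i (mut i) w) (r i)"
  shows "nearby p mu_post mu_inc (\<lambda>_ _. mixed 1) (\<lambda>_ _. mixed 1) 0 \<noteq> {} \<and>
    (\<forall>(b', s')\<in>nearby p mu_post mu_inc (\<lambda>_ _. mixed 1) (\<lambda>_ _. mixed 1) 0.
       (\<exists>j\<in>J. \<forall>t\<in>supp (mu_inc j). fitness piG p mu_post b' s' j t > fitness piG p mu_post b' s' j (mut j))
       \<or> balanced piG p mu_post b' s')"
proof
  obtain b s where "is_eq p mu_post b s" "\<forall>i. b i (incumbent, incumbent) = mixed 1"
    "\<forall>i. s i incumbent = mixed 1"
    using post_entry_equilibrium[of p r] p r by auto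
  then have "(b, s) \<in> nearby p mu_post mu_inc (\<lambda>_ _. mixed 1) (\<lambda>_ _. mixed 1) 0"
    by (simp add: nearby_def)
  then show "nearby p mu_post mu_inc (\<lambda>_ _. mixed 1) (\<lambda>_ _. mixed 1) 0 \<noteq> {}"
    by blast
  have "(\<exists>j\<in>J. \<forall>t\<in>supp (mu_inc j). fitness piG p mu_post b' s' j t > fitness piG p mu_post b' s' j (mut j))
      \<or> balanced piG p mu_post b' s'"
    if "(b', s') \<in> nearby p mu_post mu_inc (\<lambda>_ _. mixed 1) (\<lambda>_ _. mixed 1) 0" for b' s'
    using that p J small by (intro post_entry_selection) (auto simp: nearby_def)
  then show "\<forall>(b', s')\<in>nearby p mu_post mu_inc (\<lambda>_ _. mixed 1) (\<lambda>_ _. mixed 1) 0.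
       (\<exists>j\<in>J. \<forall>t\<in>supp (mu_inc j). fitness piG p mu_post b' s' j t > fitness piG p mu_post b' s' j (mut j))
       \<or> balanced piG p mu_post b' s'"
    by blast
qed

lemma entry_resisted:
  assumes p: "0 < p" "p < 1" and J: "J \<noteq> {}" and new: "\<forall>j\<in>J. mut j \<notin> supp (mu_inc j)"
  shows "\<exists>ep. 0 < ep \<and> ep < 1 \<and> (\<forall>eps. (\<forall>j\<in>J. 0 < eps j \<and> eps j < ep) \<longrightarrow>
     (let mu' = post mu_inc J mut eps in
        nearby p mu' mu_inc (\<lambda>_ _. mixed 1) (\<lambda>_ _. mixed 1) 0 \<noteq> {} \<and>
        (\<forall>(b', s')\<in>nearby p mu' mu_inc (\<lambda>_ _. mixed 1) (\<lambda>_ _. mixed 1) 0.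
           (\<exists>j\<in>J. \<forall>t\<in>supp (mu_inc j). fitness piG p mu' b' s' j t > fitness piG p mu' b' s' j (mut j))
           \<or> balanced piG p mu' b' s')))"
proof -
  obtain ep r where ep: "0 < ep" "ep \<le> (1 - p) / 4"
    and r: "\<And>i w. 1 - ep \<le> w \<Longrightarrow> w \<le> 1 \<Longrightarrow> best_reply (act1_gain i (mut i) w) (r i)"
    using uniform_best_replies_near_one[of "(1 - p) / 4" mut] p by auto
  moreover have "(1 - p) / 4 < 1"
    using p by simp
  ultimately have "ep < 1"
    by linarith
  have "let mu' = post mu_inc J mut eps in
        nearby p mu' mu_inc (\<lambda>_ _. mixed 1) (\<lambda>_ _. mixed 1) 0 \<noteq> {} \<and>
        (\<forall>(b', s')\<in>nearby p mu' mu_inc (\<lambda>_ _. mixed 1) (\<lambda>_ _. mixed 1) 0.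
           (\<exists>j\<in>J. \<forall>t\<in>supp (mu_inc j). fitness piG p mu' b' s' j t > fitness piG p mu' b' s' j (mut j))
           \<or> balanced piG p mu' b' s')"
    if eps: "\<forall>j\<in>J. 0 < eps j \<and> eps j < ep" for eps
  proof -
    interpret mutant_entry J mut eps
      using new eps \<open>ep < 1\<close> by unfold_locales auto
    have "share (other i) \<le> ep" for i
      using eps ep by (auto simp: mutant_share_def less_imp_le)
    then have "best_reply (act1_gain i (mut i) w) (r i)" if "1 - share (other i) \<le> w" "w \<le> 1" for i w
      using that r by (meson diff_left_mono order_trans)
    then show ?thesis
      unfolding Let_def using eps ep(2) by (intro post_entry_resisted[OF p J]) auto
  qed
  then show ?thesis
    using ep \<open>ep < 1\<close> by blast
qed

lemma stable_mu_inc: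
  assumes p: "0 < p" "p < 1"
  shows "stable_config piG p mu_inc (\<lambda>_ _. mixed 1) (\<lambda>_ _. mixed 1)"
  unfolding stable_config_def
proof (intro conjI allI impI, goal_cases)
  case 1
  then show ?case
    by (simp add: balanced_def)
next
  case (2 J mut eta)
  with entry_resisted[OF p, of J mut] show ?case
    by blast
qed

theorem mainTheorem18:
  fixes p :: real
  assumes "0 < p" and "p < 1"
  shows "stable_profile piG p (act1, act1)"
  unfolding stable_profile_def
  using pop_state_mu_inc is_eq_mu_inc stable_mu_inc[OF assms] agg_mu_inc by blast

end
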